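(* Let $f:[0,1]\to\mathbb{R}$ and $g:[0,1]\to\mathbb{R}$ be (sufficiently regular) scalar functions and consider the linear SDE $dx = f(t)\,x\,dt + g(t)\,dw$ on $\mathbb{R}^d$, $t\in[0,1]$. Define $$\alpha_t = e^{\int_0^t f(\tau)\,d\tau},\quad \bar\alpha_t = e^{-\int_t^1 f(\tau)\,d\tau},\quad \sigma_t^2=\int_0^t \frac{g^2(\tau)}{\alpha_\tau^2}\,d\tau,\quad \bar\sigma_t^2=\int_t^1 \frac{g^2(\tau)}{\alpha_\tau^2}\,d\tau .$$ Fix $x_0,x_1\in\mathbb{R}^d$ and $\epsilon>0$, and let $p_{\text{target}}=\mathcal{N}(x_0,\epsilon^2 I)$ and $p_{\text{initial}}=\mathcal{N}(x_1,\alpha_1^2\epsilon^2 I)$. Set $$\sigma^2=\epsilon^2+\frac{\sqrt{\sigma_1^4+4\epsilon^4}-\sigma_1^2}{2},\qquad a = x_0+\frac{\sigma^2}{\sigma_1^2}\Big(x_0-\frac{x_1}{\alpha_1}\Big),\qquad b = x_1+\frac{\sigma^2}{\sigma_1^2}\big(x_1-\alpha_1 x_0\big).$$ Then the functions $$\widehat{\Psi}_t^{\epsilon}=\mathcal{N}\big(\alpha_t a,\ (\alpha_t^2\sigma^2+\alpha_t^2\sigma_t^2)I\big),\qquad \Psi_t^{\epsilon}=\mathcal{N}\big(\bar\alpha_t b,\ (\alpha_t^2\sigma^2+\alpha_t^2\bar\sigma_t^2)I\big),\qquad t\in[0,1],$$ solve the Schrödinger bridge system $$\frac{\partial \Psi}{\partial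 t}=-\nabla_x\Psi^{\top} (f(t)x)-\tfrac12\operatorname{Tr}\!\big(g(t)^2\nabla_x^2\Psi\big),\qquad \frac{\partial \widehat\Psi}{\partial t}=-\nabla_x\cdot\big(\widehat\Psi\, f(t)x\big)+\tfrac12\operatorname{Tr}\!\big(g(t)^2\nabla_x^2\widehat\Psi\big),$$ subject to $\Psi_0\widehat\Psi_0=p_{\text{target}}$ and $\Psi_1\widehat\Psi_1=p_{\text{initial}}$. Moreover, as $\epsilon\to 0$, $\widehat\Psi_t^{\epsilon}$ and $\Psi_t^{\epsilon}$ converge to $$\widehat\Psi_t=\mathcal{N}\big(\alpha_t x_0,\ \alpha_t^2\sigma_t^2 I\big),\qquad \Psi_t=\mathcal{N}\big(\bar\alpha_t x_1,\ \alpha_t^2\bar\sigma_t^2 I\big).$$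
   Context: $\mathcal{N}(\mu,\Sigma)$ denotes the Gaussian density with mean $\mu$ and covariance $\Sigma$; as usual for Schrödinger bridge potentials, $\Psi,\widehat\Psi$ are understood up to positive multiplicative constants, so the boundary identities $\Psi_0\widehat\Psi_0=p_{\text{target}}$, $\Psi_1\widehat\Psi_1=p_{\text{initial}}$ are equalities of densities after normalization. $w$ is a standard Brownian motion on $\mathbb{R}^d$ and $I$ the $d\times d$ identity. *)

theory Defs
  imports "HOL-Analysis.Analysis"
begin

definition gauss :: "real^'n \<Rightarrow> real \<Rightarrow> real^'n \<Rightarrow> real" where
  "gauss mu v x = (2 * pi * v) powr (- real CARD('n) / 2) * exp (- (norm (x - mu))\<^sup>2 / (2 * v))"

definition pd :: "(real^'n \<Rightarrow> real) \<Rightarrow> 'n \<Rightarrow> real^'n \<Rightarrow> real" where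
  "pd u i x = deriv (\<lambda>h. u (x + h *\<^sub>R axis i 1)) 0"

definition laplacian :: "(real^'n \<Rightarrow> real) \<Rightarrow> real^'n \<Rightarrow> real" where
  "laplacian u x = (\<Sum>i\<in>UNIV. pd (pd u i) i x)"

definition twice_pdiff :: "(real^'n \<Rightarrow> real) \<Rightarrow> real^'n \<Rightarrow> bool" where
  "twice_pdiff u x \<longleftrightarrow> (\<forall>i. (\<lambda>h. u (x + h *\<^sub>R axis i 1)) differentiable (at 0)
                         \<and> (\<lambda>h. pd u i (x + h *\<^sub>R axis i 1)) differentiable (at 0))"

definition sb_backward :: "(real \<Rightarrow> real) \<Rightarrow> (real \<Rightarrow> real) \<Rightarrow> (real \<Rightarrow> real^'n \<Rightarrow> real) \<Rightarrow> bool" where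
  "sb_backward f g Psi \<longleftrightarrow> (\<forall>t\<in>{0..1}. \<forall>x. twice_pdiff (Psi t) x \<and>
      ((\<lambda>s. Psi s x) has_real_derivative
         (- (\<Sum>i\<in>UNIV. pd (Psi t) i x * (f t * x $ i)) - 1/2 * (g t)\<^sup>2 * laplacian (Psi t) x))
      (at t within {0..1}))"

definition sb_forward :: "(real \<Rightarrow> real) \<Rightarrow> (real \<Rightarrow> real) \<Rightarrow> (real \<Rightarrow> real^'n \<Rightarrow> real) \<Rightarrow> bool" where
  "sb_forward f g Psih \<longleftrightarrow> (\<forall>t\<in>{0..1}. \<forall>x. twice_pdiff (Psih t) x \<and>
      (\<forall>i. (\<lambda>h. Psih t (x + h *\<^sub>R axis i 1) * (f t * (x + h *\<^sub>R axis i 1) $ i)) differentiable (at 0)) \<and>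
      ((\<lambda>s. Psih s x) has_real_derivative
         (- (\<Sum>i\<in>UNIV. pd (\<lambda>y. Psih t y * (f t * y $ i)) i x) + 1/2 * (g t)\<^sup>2 * laplacian (Psih t) x))
      (at t within {0..1}))"

definition alpha :: "(real \<Rightarrow> real) \<Rightarrow> real \<Rightarrow> real" where
  "alpha f t = exp (integral {0..t} f)"

definition alphabar :: "(real \<Rightarrow> real) \<Rightarrow> real \<Rightarrow> real" where
  "alphabar f t = exp (- integral {t..1} f)"

definition sig2 :: "(real \<Rightarrow> real) \<Rightarrow> (real \<Rightarrow> real) \<Rightarrow> real \<Rightarrow> real" where
  "sig2 f g t = integral {0..t} (\<lambda>\<tau>. (g \<tau>)\<^sup>2 / (alpha f \<tau>)\<^sup>2)"

definition sigbar2 :: "(real \<Rightarrow> real) \<Rightarrow> (real \<Rightarrow> real) \<Rightarrow> real \<Rightarrow> real" where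
  "sigbar2 f g t = integral {t..1} (\<lambda>\<tau>. (g \<tau>)\<^sup>2 / (alpha f \<tau>)\<^sup>2)"

definition sbsigma2 :: "(real \<Rightarrow> real) \<Rightarrow> (real \<Rightarrow> real) \<Rightarrow> real \<Rightarrow> real" where
  "sbsigma2 f g eps = eps\<^sup>2 + (sqrt ((sig2 f g 1)\<^sup>2 + 4 * eps ^ 4) - sig2 f g 1) / 2"

definition sb_a :: "(real \<Rightarrow> real) \<Rightarrow> (real \<Rightarrow> real) \<Rightarrow> real^'n \<Rightarrow> real^'n \<Rightarrow> real \<Rightarrow> real^'n" where
  "sb_a f g x0 x1 eps = x0 + (sbsigma2 f g eps / sig2 f g 1) *\<^sub>R (x0 - (1 / alpha f 1) *\<^sub>R x1)"

definition sb_b :: "(real \<Rightarrow> real) \<Rightarrow> (real \<Rightarrow> real) \<Rightarrow> real^'n \<Rightarrow> real^'n \<Rightarrow> real \<Rightarrow> real^'n" where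
  "sb_b f g x0 x1 eps = x1 + (sbsigma2 f g eps / sig2 f g 1) *\<^sub>R (x1 - alpha f 1 *\<^sub>R x0)"

definition Psihat :: "(real \<Rightarrow> real) \<Rightarrow> (real \<Rightarrow> real) \<Rightarrow> real^'n \<Rightarrow> real^'n \<Rightarrow> real \<Rightarrow> real \<Rightarrow> real^'n \<Rightarrow> real" where
  "Psihat f g x0 x1 eps t = gauss (alpha f t *\<^sub>R sb_a f g x0 x1 eps)
      ((alpha f t)\<^sup>2 * sbsigma2 f g eps + (alpha f t)\<^sup>2 * sig2 f g t)"

definition Psi :: "(real \<Rightarrow> real) \<Rightarrow> (real \<Rightarrow> real) \<Rightarrow> real^'n \<Rightarrow> real^'n \<Rightarrow> real \<Rightarrow> real \<Rightarrow> real^'n \<Rightarrow> real" where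
  "Psi f g x0 x1 eps t = gauss (alphabar f t *\<^sub>R sb_b f g x0 x1 eps)
      ((alpha f t)\<^sup>2 * sbsigma2 f g eps + (alpha f t)\<^sup>2 * sigbar2 f g t)"

end

(*
  A Gaussian whose mean follows the flow m' = f m and whose variance solves the Lyapunov
  equation V' = 2 f V + g^2 solves the forward (Fokker-Planck) equation with its normalisation
  (2 pi V)^(-d/2); with V' = 2 f V - g^2 it solves the backward equation once the prefactor is
  allowed to vary in time. The means alpha_t a, alphabar_t b and the variances
  alpha_t^2 (sigma^2 + sigma_t^2), alpha_t^2 (sigma^2 + sigmabar_t^2) of Psihat and Psi satisfy
  exactly these ODEs. At t = 0 and t = 1 the product of the two Gaussians is Gaussian with
  precision the sum of the precisions: sigma^2 is the positive root of
  sigma^2 (sigma^2 + sigma_1^2) = eps^2 (2 sigma^2 + sigma_1^2), i.e.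
  1/eps^2 = 1/sigma^2 + 1/(sigma^2 + sigma_1^2), and a, b are placed so that the product has
  mean x0 resp. x1. Since sigma^2 -> 0 as eps -> 0, also a -> x0 and b -> x1.
*)

theory Submission
  imports Defs
begin

section \<open>Spatial derivatives of Gaussian kernels\<close>

definition gauss_kernel :: "real \<Rightarrow> real^'n \<Rightarrow> real \<Rightarrow> real^'n \<Rightarrow> real" where
  "gauss_kernel K m v x = K * exp (- (norm (x - m))\<^sup>2 / (2 * v))"

lemma gauss_eq_gauss_kernel:
  "gauss m v = gauss_kernel ((2 * pi * v) powr (- real CARD('n) / 2)) (m :: real^'n) v"
  by (simp add: fun_eq_iff gauss_def gauss_kernel_def)

lemma gauss_kernel_along_axis:
  "gauss_kernel K m v (x + h *\<^sub>R axis i 1) =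
     K * exp (- ((norm (x - m))\<^sup>2 + 2 * h * (x - m) $ i + h\<^sup>2) / (2 * v))"
proof -
  have "x + h *\<^sub>R axis i 1 - m = (x - m) + h *\<^sub>R axis i 1" by simp
  then have "(norm (x + h *\<^sub>R axis i 1 - m))\<^sup>2 = (norm (x - m))\<^sup>2 + 2 * h * (x - m) $ i + h\<^sup>2"
    by (simp only: power2_norm_eq_inner inner_add_left inner_add_right inner_scaleR_left
        inner_scaleR_right inner_axis inner_axis' inner_axis_axis) (simp add: power2_eq_square algebra_simps)
  then show ?thesis by (simp add: gauss_kernel_def)
qed

lemma gauss_kernel_axis_has_derivative:
  assumes "v \<noteq> 0"
  shows "((\<lambda>h. gauss_kernel K m v (x + h *\<^sub>R axis i 1)) has_real_derivative
           - gauss_kernel K m v x * (x - m) $ i / v) (at 0)"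
  unfolding gauss_kernel_along_axis using assms
  by (auto intro!: derivative_eq_intros simp: gauss_kernel_def field_simps)

lemma pd_gauss_kernel:
  assumes "v \<noteq> 0"
  shows "pd (gauss_kernel K m v) i = (\<lambda>y. - gauss_kernel K m v y * (y - m) $ i / v)"
  unfolding pd_def fun_eq_iff by (blast intro: DERIV_imp_deriv gauss_kernel_axis_has_derivative[OF assms])

lemma pd_gauss_kernel_axis_has_derivative:
  assumes "v \<noteq> 0"
  shows "((\<lambda>h. pd (gauss_kernel K m v) i (x + h *\<^sub>R axis i 1)) has_real_derivative
           gauss_kernel K m v x * (((x - m) $ i)\<^sup>2 / v\<^sup>2 - 1 / v)) (at 0)"
  unfolding pd_gauss_kernel[OF assms] gauss_kernel_along_axis using assms
  by (auto intro!: derivative_eq_intros simp: gauss_kernel_def axis_def field_simps power2_eq_square)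

lemma gauss_kernel_flux_axis_has_derivative:
  assumes "v \<noteq> 0"
  shows "((\<lambda>h. gauss_kernel K m v (x + h *\<^sub>R axis i 1) * (c * (x + h *\<^sub>R axis i 1) $ i))
           has_real_derivative gauss_kernel K m v x * c * (1 - (x - m) $ i * x $ i / v)) (at 0)"
  unfolding gauss_kernel_along_axis using assms
  by (auto intro!: derivative_eq_intros simp: gauss_kernel_def axis_def field_simps power2_eq_square)

lemma pd_pd_gauss_kernel:
  assumes "v \<noteq> 0"
  shows "pd (pd (gauss_kernel K m v) i) i x = gauss_kernel K m v x * (((x - m) $ i)\<^sup>2 / v\<^sup>2 - 1 / v)"
  unfolding pd_def[of "pd (gauss_kernel K m v) i"]
  by (rule DERIV_imp_deriv[OF pd_gauss_kernel_axis_has_derivative[OF assms]])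

lemma pd_flux_gauss_kernel:
  assumes "v \<noteq> 0"
  shows "pd (\<lambda>y. gauss_kernel K m v y * (c * y $ i)) i x = gauss_kernel K m v x * c * (1 - (x - m) $ i * x $ i / v)"
  unfolding pd_def by (rule DERIV_imp_deriv[OF gauss_kernel_flux_axis_has_derivative[OF assms]])

lemma twice_pdiff_gauss_kernel:
  assumes "v \<noteq> 0"
  shows "twice_pdiff (gauss_kernel K m v) x"
  unfolding twice_pdiff_def real_differentiable_def
  using gauss_kernel_axis_has_derivative[OF assms] pd_gauss_kernel_axis_has_derivative[OF assms] by blast

lemma laplacian_gauss_kernel:
  fixes x :: "real^'n"
  assumes "v \<noteq> 0"
  shows "laplacian (gauss_kernel K m v) x = gauss_kernel K m v x * ((norm (x - m))\<^sup>2 / v\<^sup>2 - real CARD('n) / v)"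
proof -
  have "laplacian (gauss_kernel K m v) x = (\<Sum>i\<in>UNIV. gauss_kernel K m v x * (((x - m) $ i)\<^sup>2 / v\<^sup>2 - 1 / v))"
    unfolding laplacian_def pd_pd_gauss_kernel[OF assms] ..
  also have "\<dots> = gauss_kernel K m v x * ((\<Sum>i\<in>UNIV. ((x - m) $ i)\<^sup>2) / v\<^sup>2 - real CARD('n) / v)"
    by (simp add: sum_distrib_left sum_subtractf sum_divide_distrib[symmetric] right_diff_distrib)
  also have "(\<Sum>i\<in>UNIV. ((x - m) $ i)\<^sup>2) = (norm (x - m))\<^sup>2"
    unfolding power2_norm_eq_inner inner_vec_def by (simp add: power2_eq_square)
  finally show ?thesis .
qed

lemma drift_gauss_kernel:
  assumes "v \<noteq> 0"
  shows "(\<Sum>i\<in>UNIV. pd (gauss_kernel K m v) i x * (c * x $ i)) = - gauss_kernel K m v x * c * inner (x - m) x / v"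
  unfolding pd_gauss_kernel[OF assms] inner_vec_def
  by (simp add: sum_distrib_left sum_divide_distrib algebra_simps)

lemma divergence_flux_gauss_kernel:
  fixes x :: "real^'n"
  assumes "v \<noteq> 0"
  shows "(\<Sum>i\<in>UNIV. pd (\<lambda>y. gauss_kernel K m v y * (c * y $ i)) i x) =
         gauss_kernel K m v x * c * (real CARD('n) - inner (x - m) x / v)"
  unfolding pd_flux_gauss_kernel[OF assms] inner_vec_def
  by (simp add: sum_distrib_left sum_subtractf sum_divide_distrib right_diff_distrib)

section \<open>Gaussian solutions of the forward and backward equations\<close>

lemma gauss_kernel_has_derivative_time:
  fixes m x :: "real^'n"
  assumes K: "(K has_real_derivative K t * \<kappa>) (at t within S)"
    and \<mu>: "(\<mu> has_real_derivative \<mu>') (at t within S)"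
    and V: "(V has_real_derivative V') (at t within S)" and V0: "V t \<noteq> 0"
  shows "((\<lambda>s. gauss_kernel (K s) (\<mu> s *\<^sub>R m) (V s) x) has_real_derivative
           gauss_kernel (K t) (\<mu> t *\<^sub>R m) (V t) x *
             (\<kappa> + (norm (x - \<mu> t *\<^sub>R m))\<^sup>2 * V' / (2 * (V t)\<^sup>2)
                + \<mu>' * inner (x - \<mu> t *\<^sub>R m) m / V t)) (at t within S)"
proof -
  have norm_eq: "(norm (x - c *\<^sub>R m))\<^sup>2 = inner x x - 2 * c * inner x m + c\<^sup>2 * inner m m" for c
    unfolding power2_norm_eq_inner
    by (simp add: inner_diff_left inner_diff_right inner_commute power2_eq_square algebra_simps)
  have "((\<lambda>s. K s * exp (- (inner x x - 2 * \<mu> s * inner x m + (\<mu> s)\<^sup>2 * inner m m) / (2 * V s)))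
          has_real_derivative
           gauss_kernel (K t) (\<mu> t *\<^sub>R m) (V t) x *
             (\<kappa> + (norm (x - \<mu> t *\<^sub>R m))\<^sup>2 * V' / (2 * (V t)\<^sup>2)
                + \<mu>' * inner (x - \<mu> t *\<^sub>R m) m / V t)) (at t within S)"
    unfolding gauss_kernel_def norm_eq
    apply (rule derivative_eq_intros K \<mu> V refl | simp add: V0)+
    using V0 by (simp add: inner_diff_left inner_diff_right inner_commute field_simps power2_eq_square)
  then show ?thesis by (simp add: gauss_kernel_def norm_eq)
qed

lemma inner_diff_scaleR_self:
  "inner (x - c *\<^sub>R m) x = (norm (x - c *\<^sub>R m))\<^sup>2 + c * inner (x - c *\<^sub>R m) m"
  unfolding power2_norm_eq_inner by (simp add: inner_diff_right)

lemma sb_forward_gauss_kernel: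
  fixes m :: "real^'n"
  assumes \<mu>: "\<And>t. t \<in> {0..1} \<Longrightarrow> (\<mu> has_real_derivative f t * \<mu> t) (at t within {0..1})"
    and V: "\<And>t. t \<in> {0..1} \<Longrightarrow> (V has_real_derivative 2 * f t * V t + (g t)\<^sup>2) (at t within {0..1})"
    and K: "\<And>t. t \<in> {0..1} \<Longrightarrow>
              (K has_real_derivative K t * (- real CARD('n) * (f t + (g t)\<^sup>2 / (2 * V t)))) (at t within {0..1})"
    and V0: "\<And>t. t \<in> {0..1} \<Longrightarrow> V t \<noteq> 0"
  shows "sb_forward f g (\<lambda>t. gauss_kernel (K t) (\<mu> t *\<^sub>R m) (V t))"
  unfolding sb_forward_def
proof (intro ballI allI conjI)
  fix t :: real and x :: "real^'n" assume t: "t \<in> {0..1}"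
  note V0 = V0[OF t]
  show "twice_pdiff (gauss_kernel (K t) (\<mu> t *\<^sub>R m) (V t)) x"
    by (rule twice_pdiff_gauss_kernel[OF V0])
  show "(\<lambda>h. gauss_kernel (K t) (\<mu> t *\<^sub>R m) (V t) (x + h *\<^sub>R axis i 1) * (f t * (x + h *\<^sub>R axis i 1) $ i))
          differentiable at 0" for i
    using gauss_kernel_flux_axis_has_derivative[OF V0] real_differentiable_def by blast
  show "((\<lambda>s. gauss_kernel (K s) (\<mu> s *\<^sub>R m) (V s) x) has_real_derivative
          - (\<Sum>i\<in>UNIV. pd (\<lambda>y. gauss_kernel (K t) (\<mu> t *\<^sub>R m) (V t) y * (f t * y $ i)) i x)
          + 1 / 2 * (g t)\<^sup>2 * laplacian (gauss_kernel (K t) (\<mu> t *\<^sub>R m) (V t)) x) (at t within {0..1})"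
    unfolding divergence_flux_gauss_kernel[OF V0] laplacian_gauss_kernel[OF V0] inner_diff_scaleR_self
    by (rule DERIV_cong[OF gauss_kernel_has_derivative_time[OF K[OF t] \<mu>[OF t] V[OF t] V0]])
      (use V0 in \<open>simp add: field_simps power2_eq_square\<close>)
qed

lemma sb_backward_gauss_kernel:
  fixes m :: "real^'n"
  assumes \<mu>: "\<And>t. t \<in> {0..1} \<Longrightarrow> (\<mu> has_real_derivative f t * \<mu> t) (at t within {0..1})"
    and V: "\<And>t. t \<in> {0..1} \<Longrightarrow> (V has_real_derivative 2 * f t * V t - (g t)\<^sup>2) (at t within {0..1})"
    and K: "\<And>t. t \<in> {0..1} \<Longrightarrow>
              (K has_real_derivative K t * (real CARD('n) * (g t)\<^sup>2 / (2 * V t))) (at t within {0..1})"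
    and V0: "\<And>t. t \<in> {0..1} \<Longrightarrow> V t \<noteq> 0"
  shows "sb_backward f g (\<lambda>t. gauss_kernel (K t) (\<mu> t *\<^sub>R m) (V t))"
  unfolding sb_backward_def
proof (intro ballI allI conjI)
  fix t :: real and x :: "real^'n" assume t: "t \<in> {0..1}"
  note V0 = V0[OF t]
  show "twice_pdiff (gauss_kernel (K t) (\<mu> t *\<^sub>R m) (V t)) x"
    by (rule twice_pdiff_gauss_kernel[OF V0])
  show "((\<lambda>s. gauss_kernel (K s) (\<mu> s *\<^sub>R m) (V s) x) has_real_derivative
          - (\<Sum>i\<in>UNIV. pd (gauss_kernel (K t) (\<mu> t *\<^sub>R m) (V t)) i x * (f t * x $ i))
          - 1 / 2 * (g t)\<^sup>2 * laplacian (gauss_kernel (K t) (\<mu> t *\<^sub>R m) (V t)) x) (at t within {0..1})"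
    unfolding drift_gauss_kernel[OF V0] laplacian_gauss_kernel[OF V0] inner_diff_scaleR_self
    by (rule DERIV_cong[OF gauss_kernel_has_derivative_time[OF K[OF t] \<mu>[OF t] V[OF t] V0]])
      (use V0 in \<open>simp add: field_simps power2_eq_square\<close>)
qed

lemma has_real_derivative_powr_const:
  assumes "(V has_real_derivative V') (at t within S)" and "V t > 0"
  shows "((\<lambda>s. V s powr r) has_real_derivative V t powr r * (r * V' / V t)) (at t within S)"
  using assms by (auto intro!: derivative_eq_intros simp: powr_diff field_simps)

lemma sb_forward_gauss:
  fixes m :: "real^'n"
  assumes \<mu>: "\<And>t. t \<in> {0..1} \<Longrightarrow> (\<mu> has_real_derivative f t * \<mu> t) (at t within {0..1})"
    and V: "\<And>t. t \<in> {0..1} \<Longrightarrow> (V has_real_derivative 2 * f t * V t + (g t)\<^sup>2) (at t within {0..1})"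
    and V_pos: "\<And>t. t \<in> {0..1} \<Longrightarrow> V t > 0"
  shows "sb_forward f g (\<lambda>t. gauss (\<mu> t *\<^sub>R m) (V t))"
  unfolding gauss_eq_gauss_kernel
proof (rule sb_forward_gauss_kernel[OF \<mu> V])
  fix t :: real assume t: "t \<in> {0..1}"
  show "V t \<noteq> 0" using V_pos[OF t] by simp
  show "((\<lambda>s. (2 * pi * V s) powr (- real CARD('n) / 2)) has_real_derivative
          (2 * pi * V t) powr (- real CARD('n) / 2) * (- real CARD('n) * (f t + (g t)\<^sup>2 / (2 * V t))))
          (at t within {0..1})"
  proof (rule DERIV_cong[OF has_real_derivative_powr_const])
    show "((\<lambda>s. 2 * pi * V s) has_real_derivative 2 * pi * (2 * f t * V t + (g t)\<^sup>2)) (at t within {0..1})"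
      using DERIV_cmult[OF V[OF t], of "2 * pi"] by simp
  qed (use V_pos[OF t] in \<open>simp_all add: field_simps\<close>)
qed

section \<open>The coefficients of the linear SDE\<close>

lemma alpha_pos [simp]: "alpha f t > 0"
  by (simp add: alpha_def)

lemma alpha_nonzero [simp]: "alpha f t \<noteq> 0"
  by (simp add: alpha_def)

lemma alpha_0 [simp]: "alpha f 0 = 1"
  by (simp add: alpha_def)

lemma alphabar_1 [simp]: "alphabar f 1 = 1"
  by (simp add: alphabar_def)

lemma alphabar_0: "alphabar f 0 = 1 / alpha f 1"
  by (simp add: alphabar_def alpha_def exp_minus inverse_eq_divide)

lemma sig2_0 [simp]: "sig2 f g 0 = 0"
  by (simp add: sig2_def)

lemma sigbar2_1 [simp]: "sigbar2 f g 1 = 0"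
  by (simp add: sigbar2_def)

lemma sigbar2_0: "sigbar2 f g 0 = sig2 f g 1"
  by (simp add: sigbar2_def sig2_def)

lemma integral_nonneg_any:
  fixes h :: "real \<Rightarrow> real"
  assumes "\<And>x. x \<in> S \<Longrightarrow> h x \<ge> 0"
  shows "integral S h \<ge> 0"
  using assms integral_nonneg[of h S] not_integrable_integral[of h S] by (cases "h integrable_on S") auto

lemma sig2_nonneg: "sig2 f g t \<ge> 0"
  unfolding sig2_def by (rule integral_nonneg_any) simp

lemma sigbar2_nonneg: "sigbar2 f g t \<ge> 0"
  unfolding sigbar2_def by (rule integral_nonneg_any) simp

lemma alpha_has_derivative:
  assumes "continuous_on {0..1} f" and "t \<in> {0..1}"
  shows "(alpha f has_real_derivative f t * alpha f t) (at t within {0..1})"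
  unfolding alpha_def[abs_def]
  by (rule derivative_eq_intros integral_has_real_derivative[OF assms] refl)+ simp

lemma alphabar_has_derivative:
  assumes "continuous_on {0..1} f" and "t \<in> {0..1}"
  shows "(alphabar f has_real_derivative f t * alphabar f t) (at t within {0..1})"
  unfolding alphabar_def[abs_def]
  by (rule derivative_eq_intros integral_has_real_derivative'[OF assms] refl)+ simp

lemma continuous_on_diffusion_rate:
  assumes "continuous_on {0..1} f" and "continuous_on {0..1} g"
  shows "continuous_on {0..1} (\<lambda>\<tau>. (g \<tau>)\<^sup>2 / (alpha f \<tau>)\<^sup>2)"
proof -
  have "continuous_on {0..1} (alpha f)"
    unfolding alpha_def[abs_def]
    by (intro continuous_intros indefinite_integral_continuous_1 integrable_continuous_interval assms(1))
  then show ?thesis using assms(2) by (intro continuous_intros) auto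
qed

lemma sig2_has_derivative:
  assumes "continuous_on {0..1} f" and "continuous_on {0..1} g" and "t \<in> {0..1}"
  shows "(sig2 f g has_real_derivative (g t)\<^sup>2 / (alpha f t)\<^sup>2) (at t within {0..1})"
  unfolding sig2_def[abs_def]
  by (rule integral_has_real_derivative[OF continuous_on_diffusion_rate[OF assms(1,2)] assms(3)])

lemma sigbar2_has_derivative:
  assumes "continuous_on {0..1} f" and "continuous_on {0..1} g" and "t \<in> {0..1}"
  shows "(sigbar2 f g has_real_derivative - ((g t)\<^sup>2 / (alpha f t)\<^sup>2)) (at t within {0..1})"
  unfolding sigbar2_def[abs_def]
  by (rule integral_has_real_derivative'[OF continuous_on_diffusion_rate[OF assms(1,2)] assms(3)])

lemma sig2_1_pos:
  assumes "continuous_on {0..1} f" and "continuous_on {0..1} g" and "\<exists>t\<in>{0..1}. g t \<noteq> 0"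
  shows "sig2 f g 1 > 0"
proof -
  have "sig2 f g 1 \<noteq> 0"
    using integral_eq_0_iff[OF continuous_on_diffusion_rate[OF assms(1,2)]] assms(3)
    by (auto simp: sig2_def)
  then show ?thesis using sig2_nonneg[of f g 1] by simp
qed

lemma sbsigma2_pos:
  assumes "eps \<noteq> 0"
  shows "sbsigma2 f g eps > 0"
proof -
  have "sig2 f g 1 \<le> sqrt ((sig2 f g 1)\<^sup>2 + 4 * eps ^ 4)"
    by (rule real_le_rsqrt) simp
  then show ?thesis using assms by (simp add: sbsigma2_def add_pos_nonneg)
qed

lemma sbsigma2_harmonic:
  assumes "eps \<noteq> 0"
  shows "1 / eps\<^sup>2 = 1 / sbsigma2 f g eps + 1 / (sbsigma2 f g eps + sig2 f g 1)"
proof -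
  define s S r where "s = sbsigma2 f g eps" and "S = sig2 f g 1" and "r = sqrt (S\<^sup>2 + 4 * eps ^ 4)"
  have r2: "r\<^sup>2 = S\<^sup>2 + 4 * eps ^ 4" unfolding r_def by simp
  have s_pos: "s > 0" and S_nonneg: "S \<ge> 0" using sbsigma2_pos[OF assms] sig2_nonneg unfolding s_def S_def by auto
  have quadratic: "s * (s + S) = eps\<^sup>2 * (2 * s + S)"
    using r2 unfolding s_def S_def[symmetric] sbsigma2_def r_def[symmetric]
    by (simp add: field_simps power2_eq_square power4_eq_xxxx)
  have "1 / s + 1 / (s + S) = (2 * s + S) / (s * (s + S))"
    using s_pos S_nonneg by (simp add: field_simps)
  also have "\<dots> = 1 / eps\<^sup>2"
    unfolding quadratic using s_pos S_nonneg by simp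
  finally show ?thesis unfolding s_def S_def by simp
qed

lemma sbsigma2_tendsto_0: "(sbsigma2 f g \<longlongrightarrow> 0) (at_right 0)"
proof -
  have "(sbsigma2 f g \<longlongrightarrow> 0\<^sup>2 + (sqrt ((sig2 f g 1)\<^sup>2 + 4 * 0 ^ 4) - sig2 f g 1) / 2) (at_right 0)"
    unfolding sbsigma2_def[abs_def] by (intro tendsto_intros) simp
  then show ?thesis using sig2_nonneg[of f g 1] by simp
qed

lemma forward_variance_has_derivative:
  assumes "continuous_on {0..1} f" and "continuous_on {0..1} g" and "t \<in> {0..1}"
  shows "((\<lambda>t. (alpha f t)\<^sup>2 * s + (alpha f t)\<^sup>2 * sig2 f g t) has_real_derivative
           2 * f t * ((alpha f t)\<^sup>2 * s + (alpha f t)\<^sup>2 * sig2 f g t) + (g t)\<^sup>2) (at t within {0..1})"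
  by (rule derivative_eq_intros alpha_has_derivative[OF assms(1,3)] sig2_has_derivative[OF assms] refl)+
    (simp add: field_simps power2_eq_square)

lemma backward_variance_has_derivative:
  assumes "continuous_on {0..1} f" and "continuous_on {0..1} g" and "t \<in> {0..1}"
  shows "((\<lambda>t. (alpha f t)\<^sup>2 * s + (alpha f t)\<^sup>2 * sigbar2 f g t) has_real_derivative
           2 * f t * ((alpha f t)\<^sup>2 * s + (alpha f t)\<^sup>2 * sigbar2 f g t) - (g t)\<^sup>2) (at t within {0..1})"
  by (rule derivative_eq_intros alpha_has_derivative[OF assms(1,3)] sigbar2_has_derivative[OF assms] refl)+
    (simp add: field_simps power2_eq_square)

lemma Psihat_sb_forward:
  assumes "continuous_on {0..1} f" and "continuous_on {0..1} g" and "eps \<noteq> 0"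
  shows "sb_forward f g (Psihat f g x0 x1 eps)"
proof -
  have "Psihat f g x0 x1 eps = (\<lambda>t. gauss (alpha f t *\<^sub>R sb_a f g x0 x1 eps)
          ((alpha f t)\<^sup>2 * sbsigma2 f g eps + (alpha f t)\<^sup>2 * sig2 f g t))"
    by (intro ext) (simp only: Psihat_def)
  then show ?thesis
    using alpha_has_derivative[OF assms(1)] forward_variance_has_derivative[OF assms(1,2)]
      sbsigma2_pos[OF assms(3)] sig2_nonneg
    by (simp only:) (intro sb_forward_gauss; simp add: add_pos_nonneg)
qed

lemma Psi_sb_backward:
  fixes x0 x1 :: "real^'n"
  assumes cf: "continuous_on {0..1} f" and cg: "continuous_on {0..1} g" and "eps \<noteq> 0"
  shows "\<exists>c. (\<forall>t\<in>{0..1}. c t > 0) \<and> sb_backward f g (\<lambda>t x. c t * Psi f g x0 x1 eps t x)"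
proof -
  define r where "r = - real CARD('n) / 2"
  define W where "W t = sbsigma2 f g eps + sigbar2 f g t" for t
  define V where "V t = (alpha f t)\<^sup>2 * sbsigma2 f g eps + (alpha f t)\<^sup>2 * sigbar2 f g t" for t
  \<comment> \<open>The backward equation needs a prefactor K with K' = K d g^2 / (2 V); as V = alpha^2 W and
    W' = - g^2 / alpha^2, this is K = W^(-d/2).\<close>
  define c where "c t = W t powr r / (2 * pi * V t) powr r" for t
  have W_pos: "W t > 0" for t
    using sbsigma2_pos[OF assms(3)] sigbar2_nonneg unfolding W_def by (simp add: add_pos_nonneg)
  have V_eq: "V t = (alpha f t)\<^sup>2 * W t" for t
    unfolding V_def W_def by (simp add: algebra_simps)
  have V_pos: "V t > 0" for t
    unfolding V_eq using W_pos by simp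
  have c_Psi_eq: "(\<lambda>t x. c t * Psi f g x0 x1 eps t x)
                   = (\<lambda>t. gauss_kernel (W t powr r) (alphabar f t *\<^sub>R sb_b f g x0 x1 eps) (V t))"
  proof (intro ext)
    fix t x
    have "Psi f g x0 x1 eps t = gauss (alphabar f t *\<^sub>R sb_b f g x0 x1 eps) (V t)"
      by (simp add: fun_eq_iff Psi_def V_def)
    then show "c t * Psi f g x0 x1 eps t x = gauss_kernel (W t powr r) (alphabar f t *\<^sub>R sb_b f g x0 x1 eps) (V t) x"
      using V_pos[of t] by (simp add: gauss_eq_gauss_kernel gauss_kernel_def c_def r_def)
  qed
  have backward: "sb_backward f g (\<lambda>t. gauss_kernel (W t powr r) (alphabar f t *\<^sub>R sb_b f g x0 x1 eps) (V t))"
  proof (rule sb_backward_gauss_kernel)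
    fix t :: real assume t: "t \<in> {0..1}"
    show "(alphabar f has_real_derivative f t * alphabar f t) (at t within {0..1})"
      by (rule alphabar_has_derivative[OF cf t])
    show "(V has_real_derivative 2 * f t * V t - (g t)\<^sup>2) (at t within {0..1})"
      unfolding V_def[abs_def] by (rule backward_variance_has_derivative[OF cf cg t])
    have dW: "(W has_real_derivative - ((g t)\<^sup>2 / (alpha f t)\<^sup>2)) (at t within {0..1})"
      unfolding W_def[abs_def] by (rule derivative_eq_intros sigbar2_has_derivative[OF cf cg t] refl)+ simp
    show "((\<lambda>t. W t powr r) has_real_derivative W t powr r * (real CARD('n) * (g t)\<^sup>2 / (2 * V t)))
              (at t within {0..1})"
      by (rule DERIV_cong[OF has_real_derivative_powr_const[OF dW W_pos]]) (simp add: V_eq r_def field_simps)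
    show "V t \<noteq> 0" using V_pos[of t] by simp
  qed
  have "c t > 0" for t
    unfolding c_def using W_pos[of t] V_pos[of t] by simp
  then show ?thesis
    using backward unfolding c_Psi_eq[symmetric] by blast
qed

section \<open>Boundary conditions\<close>

lemma gauss_mult:
  fixes m1 m2 :: "real^'n"
  assumes v1: "v1 > 0" and v2: "v2 > 0" and v: "1 / v = 1 / v1 + 1 / v2"
  shows "\<exists>k>0. \<forall>x. gauss m1 v1 x * gauss m2 v2 x = k * gauss ((v / v1) *\<^sub>R m1 + (v / v2) *\<^sub>R m2) v x"
proof -
  define m where "m = (v / v1) *\<^sub>R m1 + (v / v2) *\<^sub>R m2"
  define C where "C = inner m1 m1 / v1 + inner m2 m2 / v2 - inner m m / v"
  define P where "P w = (2 * pi * w) powr (- real CARD('n) / 2)" for w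
  have v_pos: "v > 0"
    using v v1 v2 by (metis add_pos_pos zero_less_divide_1_iff)
  have square: "(norm (x - m1))\<^sup>2 / v1 + (norm (x - m2))\<^sup>2 / v2 = (norm (x - m))\<^sup>2 / v + C" for x
  proof -
    have xm: "inner x m / v = inner x m1 / v1 + inner x m2 / v2"
      using v_pos by (simp add: m_def inner_add_right add_divide_distrib)
    have "(norm (x - m1))\<^sup>2 / v1 + (norm (x - m2))\<^sup>2 / v2
        = inner x x * (1 / v1 + 1 / v2) - 2 * (inner x m1 / v1 + inner x m2 / v2)
          + inner m1 m1 / v1 + inner m2 m2 / v2"
      by (simp add: power2_norm_eq_inner inner_diff_left inner_diff_right inner_commute
          add_divide_distrib diff_divide_distrib algebra_simps)
    also have "\<dots> = (inner x x - 2 * inner x m + inner m m) / v + C"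
      unfolding v[symmetric] xm[symmetric] C_def by (simp add: add_divide_distrib diff_divide_distrib)
    also have "\<dots> = (norm (x - m))\<^sup>2 / v + C"
      by (simp add: power2_norm_eq_inner inner_diff_left inner_diff_right inner_commute)
    finally show ?thesis .
  qed
  define k where "k = P v1 * P v2 * exp (- C / 2) / P v"
  have "gauss m1 v1 x * gauss m2 v2 x = k * gauss m v x" for x
  proof -
    have "gauss m1 v1 x * gauss m2 v2 x
        = P v1 * P v2 * exp (- ((norm (x - m1))\<^sup>2 / v1 + (norm (x - m2))\<^sup>2 / v2) / 2)"
      by (simp add: gauss_def P_def exp_add[symmetric] add_divide_distrib)
    also have "\<dots> = k * gauss m v x"
      unfolding square using v_pos by (simp add: k_def gauss_def P_def exp_add[symmetric] add_divide_distrib)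
    finally show ?thesis .
  qed
  moreover have "k > 0"
    unfolding k_def P_def using v_pos v1 v2 by simp
  ultimately show ?thesis unfolding m_def by blast
qed

lemma gauss_mult_bridge:
  fixes u w :: "real^'n"
  assumes s: "s > 0" and S: "S > 0" and c: "c > 0" and e: "1 / e = 1 / s + 1 / (s + S)"
  shows "\<exists>k>0. \<forall>x. gauss (u + (s / S) *\<^sub>R (u - w)) (c * s) x
                    * gauss (w + (s / S) *\<^sub>R (w - u)) (c * (s + S)) x
                  = k * gauss u (c * e) x"
proof -
  have "1 / s + 1 / (s + S) > 0"
    using s S by (simp add: add_pos_pos)
  then have "e \<noteq> 0"
    using e by auto
  then have e_eq: "e = s * (s + S) / (2 * s + S)"
    using e s S by (simp add: field_simps)
  have "1 / (c * e) = (1 / s + 1 / (s + S)) / c"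
    unfolding e[symmetric] by simp
  also have "\<dots> = 1 / (c * s) + 1 / (c * (s + S))"
    by (simp add: add_divide_distrib mult.commute)
  finally have "1 / (c * e) = 1 / (c * s) + 1 / (c * (s + S))" .
  moreover have "c * e / (c * s) = (s + S) / (2 * s + S)" and "c * e / (c * (s + S)) = s / (2 * s + S)"
    unfolding e_eq using s S c by simp_all
  moreover have "((s + S) / (2 * s + S)) *\<^sub>R (u + (s / S) *\<^sub>R (u - w))
                 + (s / (2 * s + S)) *\<^sub>R (w + (s / S) *\<^sub>R (w - u)) = u"
  proof -
    have "(s + S) / (2 * s + S) * (a + s / S * (a - b)) + s / (2 * s + S) * (b + s / S * (b - a)) = a"
      for a b :: real
    proof -
      have "(s + S) * (a + s / S * (a - b)) + s * (b + s / S * (b - a)) = (2 * s + S) * a"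
        using S by (simp add: field_simps)
      then show ?thesis
        using s S by (simp add: add_divide_distrib[symmetric])
    qed
    then show ?thesis
      unfolding vec_eq_iff vector_add_component vector_scaleR_component vector_minus_component by simp
  qed
  ultimately show ?thesis
    using gauss_mult[of "c * s" "c * (s + S)" "c * e" "u + (s / S) *\<^sub>R (u - w)" "w + (s / S) *\<^sub>R (w - u)"] s S c
    by (simp add: add_pos_pos)
qed

lemma Psi_mult_Psihat_at_0:
  fixes x0 x1 :: "real^'n"
  assumes S: "sig2 f g 1 > 0" and eps: "eps \<noteq> 0"
  shows "\<exists>k>0. \<forall>x. Psi f g x0 x1 eps 0 x * Psihat f g x0 x1 eps 0 x = k * gauss x0 (eps\<^sup>2) x"
proof -
  define s S where "s = sbsigma2 f g eps" and "S = sig2 f g 1"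
  define w where "w = (1 / alpha f 1) *\<^sub>R x1"
  have "Psihat f g x0 x1 eps 0 = gauss (x0 + (s / S) *\<^sub>R (x0 - w)) (1 * s)"
    by (simp add: Psihat_def sb_a_def s_def S_def w_def)
  moreover have "Psi f g x0 x1 eps 0 = gauss (w + (s / S) *\<^sub>R (w - x0)) (1 * (s + S))"
    by (simp add: Psi_def sb_b_def alphabar_0 sigbar2_0 s_def S_def w_def scaleR_add_right scaleR_diff_right
        mult.commute)
  moreover obtain k where "k > 0" "\<forall>x. gauss (x0 + (s / S) *\<^sub>R (x0 - w)) (1 * s) x
                                      * gauss (w + (s / S) *\<^sub>R (w - x0)) (1 * (s + S)) x
                                    = k * gauss x0 (1 * eps\<^sup>2) x"
    using gauss_mult_bridge[OF _ _ zero_less_one sbsigma2_harmonic[OF eps]] sbsigma2_pos[OF eps] S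
    unfolding s_def S_def by blast
  ultimately show ?thesis by (auto simp: mult.commute)
qed

lemma Psi_mult_Psihat_at_1:
  fixes x0 x1 :: "real^'n"
  assumes S: "sig2 f g 1 > 0" and eps: "eps \<noteq> 0"
  shows "\<exists>k>0. \<forall>x. Psi f g x0 x1 eps 1 x * Psihat f g x0 x1 eps 1 x
                    = k * gauss x1 ((alpha f 1)\<^sup>2 * eps\<^sup>2) x"
proof -
  define s S where "s = sbsigma2 f g eps" and "S = sig2 f g 1"
  define w where "w = alpha f 1 *\<^sub>R x0"
  have "Psi f g x0 x1 eps 1 = gauss (x1 + (s / S) *\<^sub>R (x1 - w)) ((alpha f 1)\<^sup>2 * s)"
    by (simp add: Psi_def sb_b_def s_def S_def w_def)
  moreover have "Psihat f g x0 x1 eps 1 = gauss (w + (s / S) *\<^sub>R (w - x1)) ((alpha f 1)\<^sup>2 * (s + S))"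
    by (simp add: Psihat_def sb_a_def s_def S_def w_def scaleR_add_right scaleR_diff_right distrib_left
        mult.commute)
  moreover obtain k where "k > 0" "\<forall>x. gauss (x1 + (s / S) *\<^sub>R (x1 - w)) ((alpha f 1)\<^sup>2 * s) x
                                      * gauss (w + (s / S) *\<^sub>R (w - x1)) ((alpha f 1)\<^sup>2 * (s + S)) x
                                    = k * gauss x1 ((alpha f 1)\<^sup>2 * eps\<^sup>2) x"
    using gauss_mult_bridge[OF _ _ _ sbsigma2_harmonic[OF eps]] sbsigma2_pos[OF eps] S
    unfolding s_def S_def by (metis alpha_pos zero_less_power)
  ultimately show ?thesis by auto
qed

section \<open>The limit eps -> 0\<close>

lemma tendsto_gauss:
  assumes "(m' \<longlongrightarrow> m) F" and "(v' \<longlongrightarrow> v) F" and "v > 0"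
  shows "((\<lambda>e. gauss (m' e) (v' e) x) \<longlongrightarrow> gauss m v x) F"
  unfolding gauss_def using assms by (intro tendsto_intros) auto

lemma Psihat_tendsto:
  assumes "(alpha f t)\<^sup>2 * sig2 f g t > 0"
  shows "((\<lambda>eps. Psihat f g x0 x1 eps t x)
           \<longlongrightarrow> gauss (alpha f t *\<^sub>R x0) ((alpha f t)\<^sup>2 * sig2 f g t) x) (at_right 0)"
proof -
  have "((\<lambda>eps. alpha f t *\<^sub>R sb_a f g x0 x1 eps)
          \<longlongrightarrow> alpha f t *\<^sub>R (x0 + 0 *\<^sub>R (x0 - (1 / alpha f 1) *\<^sub>R x1))) (at_right 0)"
    unfolding sb_a_def by (intro tendsto_intros tendsto_divide_zero sbsigma2_tendsto_0)
  moreover have "((\<lambda>eps. (alpha f t)\<^sup>2 * sbsigma2 f g eps + (alpha f t)\<^sup>2 * sig2 f g t)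
                   \<longlongrightarrow> (alpha f t)\<^sup>2 * 0 + (alpha f t)\<^sup>2 * sig2 f g t) (at_right 0)"
    by (intro tendsto_intros sbsigma2_tendsto_0)
  ultimately show ?thesis
    unfolding Psihat_def using tendsto_gauss assms by fastforce
qed

lemma Psi_tendsto:
  assumes "(alpha f t)\<^sup>2 * sigbar2 f g t > 0"
  shows "((\<lambda>eps. Psi f g x0 x1 eps t x)
           \<longlongrightarrow> gauss (alphabar f t *\<^sub>R x1) ((alpha f t)\<^sup>2 * sigbar2 f g t) x) (at_right 0)"
proof -
  have "((\<lambda>eps. alphabar f t *\<^sub>R sb_b f g x0 x1 eps)
          \<longlongrightarrow> alphabar f t *\<^sub>R (x1 + 0 *\<^sub>R (x1 - alpha f 1 *\<^sub>R x0))) (at_right 0)"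
    unfolding sb_b_def by (intro tendsto_intros tendsto_divide_zero sbsigma2_tendsto_0)
  moreover have "((\<lambda>eps. (alpha f t)\<^sup>2 * sbsigma2 f g eps + (alpha f t)\<^sup>2 * sigbar2 f g t)
                   \<longlongrightarrow> (alpha f t)\<^sup>2 * 0 + (alpha f t)\<^sup>2 * sigbar2 f g t) (at_right 0)"
    by (intro tendsto_intros sbsigma2_tendsto_0)
  ultimately show ?thesis
    unfolding Psi_def using tendsto_gauss assms by fastforce
qed

theorem lemma1:
  fixes f g :: "real \<Rightarrow> real" and x0 x1 :: "real^'n"
  assumes "continuous_on {0..1} f" and "continuous_on {0..1} g"
    and "\<exists>t\<in>{0..1}. g t \<noteq> 0"
  shows "(\<forall>eps>0.
            (\<exists>c ch. (\<forall>t\<in>{0..1}. c t > 0 \<and> ch t > 0)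
                \<and> sb_backward f g (\<lambda>t x. c t * Psi f g x0 x1 eps t x)
                \<and> sb_forward f g (\<lambda>t x. ch t * Psihat f g x0 x1 eps t x))
          \<and> (\<exists>k>0. \<forall>x. Psi f g x0 x1 eps 0 x * Psihat f g x0 x1 eps 0 x = k * gauss x0 (eps\<^sup>2) x)
          \<and> (\<exists>k>0. \<forall>x. Psi f g x0 x1 eps 1 x * Psihat f g x0 x1 eps 1 x
                        = k * gauss x1 ((alpha f 1)\<^sup>2 * eps\<^sup>2) x))
       \<and> (\<forall>t\<in>{0..1}. \<forall>x. (alpha f t)\<^sup>2 * sig2 f g t > 0 \<longrightarrow>
            ((\<lambda>eps. Psihat f g x0 x1 eps t x)
               \<longlongrightarrow> gauss (alpha f t *\<^sub>R x0) ((alpha f t)\<^sup>2 * sig2 f g t) x) (at_right 0))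
       \<and> (\<forall>t\<in>{0..1}. \<forall>x. (alpha f t)\<^sup>2 * sigbar2 f g t > 0 \<longrightarrow>
            ((\<lambda>eps. Psi f g x0 x1 eps t x)
               \<longlongrightarrow> gauss (alphabar f t *\<^sub>R x1) ((alpha f t)\<^sup>2 * sigbar2 f g t) x) (at_right 0))"
proof -
  note cf = assms(1) and cg = assms(2)
  have S: "sig2 f g 1 > 0" by (rule sig2_1_pos[OF assms])
  have potentials: "\<exists>c ch. (\<forall>t\<in>{0..1}. c t > 0 \<and> ch t > 0)
                      \<and> sb_backward f g (\<lambda>t x. c t * Psi f g x0 x1 eps t x)
                      \<and> sb_forward f g (\<lambda>t x. ch t * Psihat f g x0 x1 eps t x)" if eps: "eps \<noteq> 0" for eps
  proof -
    obtain c where "\<forall>t\<in>{0..1}. c t > 0" "sb_backward f g (\<lambda>t x. c t * Psi f g x0 x1 eps t x)"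
      using Psi_sb_backward[OF cf cg eps] by blast
    moreover have "sb_forward f g (\<lambda>t x. 1 * Psihat f g x0 x1 eps t x)"
      using Psihat_sb_forward[OF cf cg eps] by simp
    ultimately show ?thesis by (intro exI[of _ c] exI[of _ "\<lambda>_. 1"]) simp
  qed
  show ?thesis
    by (intro conjI allI impI ballI potentials Psi_mult_Psihat_at_0[OF S] Psi_mult_Psihat_at_1[OF S]
        Psihat_tendsto Psi_tendsto) simp_all
qed

end
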